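(* Let $\mathcal{L}:\mathbb{R}^d\to\mathbb{R}$ be differentiable on $\mathbb{R}^d\setminus\{\mathbf{0}\}$ and radially invariant. Consider two runs $S$ and $\tilde S$ of the generic optimization scheme $$\mathbf{x}_{k+1}=\mathbf{x}_k-\eta_k\,\mathbf{a}_k\oslash\mathbf{b}_k,\qquad \mathbf{a}_k=\beta\mathbf{a}_{k-1}+\nabla\mathcal{L}(\mathbf{x}_k)+\lambda\mathbf{x}_k$$ (the second with its own $\tilde\eta_k,\tilde\beta,\tilde\lambda,\tilde{\mathbf{b}}_k$, iterates $\tilde{\mathbf{x}}_k$, etc.), with nonzero iterates and $\mathbf{b}_k,\tilde{\mathbf{b}}_k$ having nonzero entries, and for each run define $r_k=\|\mathbf{x}_k\|$, $\mathbf{u}_k=\mathbf{x}_k/r_k$, $\mathbf{c}_k=r_k\mathbf{a}_k\oslash\frac{\mathbf{b}_k}{d^{-1/2}\|\mathbf{b}_k\|}$, $A_k=\frac{\eta_k}{r_k^2 d^{-1/2}\|\mathbf{b}_k\|}$, $\eta^e_k=A_k(1-A_k\langle\mathbf{c}_k,\mathbf{u}_k\rangle)^{-1}$, $\mathbf{c}_k^\perp=\mathbf{c}_k-\langle\mathbf{c}_k,\mathbf{u}_k\rangle\mathbf{u}_k$ (and analogously with tildes). Assume $1-A_k\langle\mathbf{c}_k,\mathbf{u}_k\rangle>0$ and $1-\tilde A_k\langle\tilde{\mathbf{c}}_k,\tilde{\mathbf{u}}_k\rangle>0$ for all $k$. If $\mathbf{u}_0=\tilde{\mathbf{u}}_0$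 and for all $k\ge0$, $\eta^e_k=\tilde\eta^e_k$ and $\mathbf{c}^\perp_k=\tilde{\mathbf{c}}^\perp_k$, then $\mathbf{u}_k=\tilde{\mathbf{u}}_k$ for all $k\ge0$.
   Context: $\oslash$ denotes element-wise division; $\|\cdot\|$ and $\langle\cdot,\cdot\rangle$ are Euclidean. Radially invariant means $\mathcal{L}(\rho\mathbf{x})=\mathcal{L}(\mathbf{x})$ for all $\rho>0$. *)

theory Defs
  imports "HOL-Analysis.Analysis"
begin

definition ediv :: "real^'n \<Rightarrow> real^'n \<Rightarrow> real^'n" where
  "ediv a b = (\<chi> i. a $ i / b $ i)"

definition radially_invariant :: "(real^'n \<Rightarrow> real) \<Rightarrow> bool" where
  "radially_invariant L \<longleftrightarrow> (\<forall>x (\<rho>::real). \<rho> > 0 \<longrightarrow> L (\<rho> *\<^sub>R x) = L x)"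

text \<open>One run of the generic scheme, with gradient field G of L, learning rates eta,
  momentum beta, weight decay lambda, initial momentum a_{-1} = am.\<close>
definition is_run ::
  "(real^'n \<Rightarrow> real^'n) \<Rightarrow> (nat \<Rightarrow> real) \<Rightarrow> real \<Rightarrow> real \<Rightarrow> real^'n
   \<Rightarrow> (nat \<Rightarrow> real^'n) \<Rightarrow> (nat \<Rightarrow> real^'n) \<Rightarrow> (nat \<Rightarrow> real^'n) \<Rightarrow> bool" where
  "is_run G eta beta lam am x a b \<longleftrightarrow>
     (\<forall>k. x (Suc k) = x k - eta k *\<^sub>R ediv (a k) (b k)) \<and>
     a 0 = beta *\<^sub>R am + G (x 0) + lam *\<^sub>R x 0 \<and>
     (\<forall>k. a (Suc k) = beta *\<^sub>R a k + G (x (Suc k)) + lam *\<^sub>R x (Suc k))"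

definition rr :: "(nat \<Rightarrow> real^'n) \<Rightarrow> nat \<Rightarrow> real" where
  "rr x k = norm (x k)"

definition uu :: "(nat \<Rightarrow> real^'n) \<Rightarrow> nat \<Rightarrow> real^'n" where
  "uu x k = (1 / rr x k) *\<^sub>R x k"

definition bscale :: "(nat \<Rightarrow> real^'n) \<Rightarrow> nat \<Rightarrow> real" where
  "bscale b k = (1 / sqrt (real CARD('n))) * norm (b k)"

definition cc :: "(nat \<Rightarrow> real^'n) \<Rightarrow> (nat \<Rightarrow> real^'n) \<Rightarrow> (nat \<Rightarrow> real^'n) \<Rightarrow> nat \<Rightarrow> real^'n" where
  "cc x a b k = rr x k *\<^sub>R ediv (a k) ((1 / bscale b k) *\<^sub>R b k)"

definition AA :: "(nat \<Rightarrow> real) \<Rightarrow> (nat \<Rightarrow> real^'n) \<Rightarrow> (nat \<Rightarrow> real^'n) \<Rightarrow> nat \<Rightarrow> real" where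
  "AA eta x b k = eta k / ((rr x k)\<^sup>2 * bscale b k)"

definition eff_lr :: "(nat \<Rightarrow> real) \<Rightarrow> (nat \<Rightarrow> real^'n) \<Rightarrow> (nat \<Rightarrow> real^'n) \<Rightarrow> (nat \<Rightarrow> real^'n) \<Rightarrow> nat \<Rightarrow> real" where
  "eff_lr eta x a b k = AA eta x b k / (1 - AA eta x b k * (cc x a b k \<bullet> uu x k))"

definition cperp :: "(nat \<Rightarrow> real^'n) \<Rightarrow> (nat \<Rightarrow> real^'n) \<Rightarrow> (nat \<Rightarrow> real^'n) \<Rightarrow> nat \<Rightarrow> real^'n" where
  "cperp x a b k = cc x a b k - (cc x a b k \<bullet> uu x k) *\<^sub>R uu x k"

end

theory Submission
  imports Defs
begin

text \<open>Writing \<open>x\<^sub>k = r\<^sub>k u\<^sub>k\<close>, one step of the scheme reads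
  \<open>x\<^sub>k\<^sub>+\<^sub>1 = r\<^sub>k (1 - A\<^sub>k \<langle>c\<^sub>k, u\<^sub>k\<rangle>) (u\<^sub>k - \<eta>\<^sup>e\<^sub>k c\<^sup>\<bottom>\<^sub>k)\<close>. The scalar factor is positive,
  so \<open>u\<^sub>k\<^sub>+\<^sub>1\<close> is the normalisation of \<open>u\<^sub>k - \<eta>\<^sup>e\<^sub>k c\<^sup>\<bottom>\<^sub>k\<close> and is determined by \<open>u\<^sub>k\<close>,
  \<open>\<eta>\<^sup>e\<^sub>k\<close> and \<open>c\<^sup>\<bottom>\<^sub>k\<close> alone; induction on \<open>k\<close> concludes.\<close>

lemma ediv_scaleR_right: "ediv a (t *\<^sub>R b) = inverse t *\<^sub>R ediv a b"
  unfolding ediv_def by (simp add: vec_eq_iff field_simps)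

lemma uu_eq_sgn: "uu x k = sgn (x k)"
  unfolding uu_def rr_def sgn_div_norm by (simp add: divide_inverse_commute)

lemma cc_eq_scaleR_ediv: "cc x a b k = (rr x k * bscale b k) *\<^sub>R ediv (a k) (b k)"
  unfolding cc_def ediv_scaleR_right by simp

lemma diff_scaleR_eq_perp_step:
  fixes u c :: "'a::real_inner"
  assumes "1 - A * (c \<bullet> u) \<noteq> 0"
  shows "u - A *\<^sub>R c =
    (1 - A * (c \<bullet> u)) *\<^sub>R (u - (A / (1 - A * (c \<bullet> u))) *\<^sub>R (c - (c \<bullet> u) *\<^sub>R u))"
proof -
  define p where "p = 1 - A * (c \<bullet> u)"
  have pA: "p * (A / p) = A"
    using assms by (simp add: p_def)
  have "p *\<^sub>R (u - (A / p) *\<^sub>R (c - (c \<bullet> u) *\<^sub>R u))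
      = p *\<^sub>R u - (p * (A / p)) *\<^sub>R c + (p * (A / p) * (c \<bullet> u)) *\<^sub>R u"
    by (simp add: algebra_simps scaleR_diff_right)
  also have "\<dots> = u - A *\<^sub>R c"
    unfolding pA by (simp add: p_def algebra_simps)
  finally show ?thesis
    by (simp add: p_def)
qed

lemma step_eq_scaleR_normalized:
  assumes step: "x (Suc k) = x k - eta k *\<^sub>R ediv (a k) (b k)"
    and "x k \<noteq> 0" and "b k \<noteq> 0"
  shows "x (Suc k) = rr x k *\<^sub>R (uu x k - AA eta x b k *\<^sub>R cc x a b k)"
proof -
  have "rr x k > 0" "bscale b k > 0"
    using assms(2,3) by (simp_all add: rr_def bscale_def)
  then show ?thesis
    unfolding step cc_eq_scaleR_ediv AA_def uu_def
    by (simp add: algebra_simps power2_eq_square rr_def)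
qed

lemma uu_Suc_eq_sgn_eff_step:
  assumes step: "x (Suc k) = x k - eta k *\<^sub>R ediv (a k) (b k)"
    and "x k \<noteq> 0" and "b k \<noteq> 0"
    and pos: "1 - AA eta x b k * (cc x a b k \<bullet> uu x k) > 0"
  shows "uu x (Suc k) = sgn (uu x k - eff_lr eta x a b k *\<^sub>R cperp x a b k)"
proof -
  have "x (Suc k) = (rr x k * (1 - AA eta x b k * (cc x a b k \<bullet> uu x k))) *\<^sub>R
      (uu x k - eff_lr eta x a b k *\<^sub>R cperp x a b k)"
    using step_eq_scaleR_normalized[of x k eta a b, OF assms(1-3)]
      diff_scaleR_eq_perp_step[of "AA eta x b k" "cc x a b k" "uu x k"] pos
    by (simp add: eff_lr_def cperp_def)
  moreover have "rr x k * (1 - AA eta x b k * (cc x a b k \<bullet> uu x k)) > 0"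
    using assms(2) pos by (simp add: rr_def)
  ultimately show ?thesis
    by (simp add: uu_eq_sgn sgn_scaleR)
qed

theorem lemma3:
  fixes L :: "real^'n \<Rightarrow> real" and G :: "real^'n \<Rightarrow> real^'n"
    and eta eta' :: "nat \<Rightarrow> real" and beta beta' lam lam' :: real
    and am am' :: "real^'n" and x a b x' a' b' :: "nat \<Rightarrow> real^'n"
  assumes grad: "\<forall>y. y \<noteq> 0 \<longrightarrow> (L has_derivative (\<lambda>h. G y \<bullet> h)) (at y)"
    and rad: "radially_invariant L"
    and run1: "is_run G eta beta lam am x a b"
    and run2: "is_run G eta' beta' lam' am' x' a' b'"
    and xnz: "\<forall>k. x k \<noteq> 0" and xnz': "\<forall>k. x' k \<noteq> 0"
    and bnz: "\<forall>k i. b k $ i \<noteq> 0" and bnz': "\<forall>k i. b' k $ i \<noteq> 0"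
    and pos: "\<forall>k. 1 - AA eta x b k * (cc x a b k \<bullet> uu x k) > 0"
    and pos': "\<forall>k. 1 - AA eta' x' b' k * (cc x' a' b' k \<bullet> uu x' k) > 0"
    and u0: "uu x 0 = uu x' 0"
    and lr: "\<forall>k. eff_lr eta x a b k = eff_lr eta' x' a' b' k"
    and perp: "\<forall>k. cperp x a b k = cperp x' a' b' k"
  shows "\<forall>k. uu x k = uu x' k"
proof
  fix k
  have "b k \<noteq> 0" "b' k \<noteq> 0" for k
    using bnz bnz' by (metis zero_index)+
  then have "uu x (Suc k) = sgn (uu x k - eff_lr eta x a b k *\<^sub>R cperp x a b k)"
    and "uu x' (Suc k) = sgn (uu x' k - eff_lr eta' x' a' b' k *\<^sub>R cperp x' a' b' k)" for k
    using run1 run2 xnz xnz' pos pos'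
    by (simp_all add: is_run_def uu_Suc_eq_sgn_eff_step)
  then show "uu x k = uu x' k"
    using u0 lr perp by (induction k) simp_all
qed

end
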